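(* Let $\mathcal{H}$ be a complex separable Hilbert space, let $A\in\mathcal{B}(\mathcal{H})$, let $0<L<\infty$, and let $\mathcal{G}\subset\mathcal{H}$ be a countable Bessel system. The following are equivalent: (i) $\{e^{tA}g\}_{g\in\mathcal{G},\,t\in[0,L]}$ is a semi-continuous frame for $\mathcal{H}$. (ii) There exists $\delta>0$ such that for every finite set $T=\{t_1,\dots,t_n\}$ with $0=t_1<t_2<\dots<t_n\le t_{n+1}:=L$ and $|t_{j+1}-t_j|<\delta$ for all $j\in\{1,\dots,n\}$, the system $\{e^{tA}g\}_{g\in\mathcal{G},\,t\in T}$ is a frame for $\mathcal{H}$. (iii) There exists a finite set $T=\{t_1,\dots,t_n\}$ with $0=t_1<t_2<\dots<t_n\le L$ such that $\{e^{tA}g\}_{g\in\mathcal{G},\,t\in T}$ is a frame for $\mathcal{H}$.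
   Context: For $A\in\mathcal{B}(\mathcal{H})$, $e^{tA}:=\sum_{n\ge0}\frac{t^n}{n!}A^n$. A countable family $\{f_k\}\subset\mathcal{H}$ is a Bessel system if there is $C>0$ with $\sum_k|\langle f,f_k\rangle|^2\le C\|f\|^2$ for all $f\in\mathcal{H}$, and a frame if moreover there is $c>0$ with $c\|f\|^2\le\sum_k|\langle f,f_k\rangle|^2$ for all $f$. For a countable $\mathcal{G}\subset\mathcal{H}$ and an interval $\mathcal{T}\subset[0,\infty)$, $\{e^{tA}g\}_{g\in\mathcal{G},t\in\mathcal{T}}$ is a semi-continuous frame for $\mathcal{H}$ if there are constants $c,C>0$ such that $c\|f\|^2\le\sum_{g\in\mathcal{G}}\int_{\mathcal{T}}|\langle f,e^{tA}g\rangle|^2\,dt\le C\|f\|^2$ for all $f\in\mathcal{H}$. *)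

theory Defs
  imports "HOL-Analysis.Analysis"
begin

class complex_inner_space = real_normed_vector +
  fixes hscale :: "complex \<Rightarrow> 'a \<Rightarrow> 'a"
    and hinner :: "'a \<Rightarrow> 'a \<Rightarrow> complex"
  assumes hscale_of_real: "hscale (complex_of_real r) x = r *\<^sub>R x"
    and hscale_add_right: "hscale a (x + y) = hscale a x + hscale a y"
    and hscale_add_left: "hscale (a + b) x = hscale a x + hscale b x"
    and hscale_hscale: "hscale a (hscale b x) = hscale (a * b) x"
    and hscale_one: "hscale 1 x = x"
    and hinner_commute: "hinner x y = cnj (hinner y x)"
    and hinner_add_left: "hinner (x + y) z = hinner x z + hinner y z"
    and hinner_scale_left: "hinner (hscale a x) y = a * hinner x y"
    and hinner_self_norm: "hinner x x = complex_of_real ((norm x)\<^sup>2)"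

class complex_hilbert_space = complex_inner_space + complete_space

definition separable_space :: "'a::topological_space itself \<Rightarrow> bool" where
  "separable_space _ \<longleftrightarrow> (\<exists>D::'a set. countable D \<and> closure D = UNIV)"

definition bounded_clinear_op :: "('a::complex_inner_space \<Rightarrow> 'a) \<Rightarrow> bool" where
  "bounded_clinear_op A \<longleftrightarrow>
     (\<forall>x y. A (x + y) = A x + A y) \<and> (\<forall>c x. A (hscale c x) = hscale c (A x)) \<and>
     (\<exists>K. \<forall>x. norm (A x) \<le> K * norm x)"

definition exp_op :: "('a::complex_inner_space \<Rightarrow> 'a) \<Rightarrow> real \<Rightarrow> 'a \<Rightarrow> 'a" where
  "exp_op A t x = (\<Sum>n. (t ^ n / fact n) *\<^sub>R (A ^^ n) x)"

definition bessel_system :: "'a::complex_inner_space set \<Rightarrow> bool" where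
  "bessel_system G \<longleftrightarrow> (\<exists>C>0. \<forall>f.
      (\<lambda>g. (cmod (hinner f g))\<^sup>2) summable_on G \<and>
      (\<Sum>\<^sub>\<infinity>g\<in>G. (cmod (hinner f g))\<^sup>2) \<le> C * (norm f)\<^sup>2)"

definition is_frame :: "'i set \<Rightarrow> ('i \<Rightarrow> 'a::complex_inner_space) \<Rightarrow> bool" where
  "is_frame I \<phi> \<longleftrightarrow> (\<exists>c>0. \<exists>C>0. \<forall>f.
      (\<lambda>i. (cmod (hinner f (\<phi> i)))\<^sup>2) summable_on I \<and>
      c * (norm f)\<^sup>2 \<le> (\<Sum>\<^sub>\<infinity>i\<in>I. (cmod (hinner f (\<phi> i)))\<^sup>2) \<and>
      (\<Sum>\<^sub>\<infinity>i\<in>I. (cmod (hinner f (\<phi> i)))\<^sup>2) \<le> C * (norm f)\<^sup>2)"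

definition semi_continuous_frame ::
    "('a::complex_inner_space \<Rightarrow> 'a) \<Rightarrow> 'a set \<Rightarrow> real set \<Rightarrow> bool" where
  "semi_continuous_frame A G T \<longleftrightarrow> (\<exists>c>0. \<exists>C>0. \<forall>f.
      (\<forall>g\<in>G. (\<lambda>t. (cmod (hinner f (exp_op A t g)))\<^sup>2) integrable_on T) \<and>
      (\<lambda>g. integral T (\<lambda>t. (cmod (hinner f (exp_op A t g)))\<^sup>2)) summable_on G \<and>
      c * (norm f)\<^sup>2 \<le> (\<Sum>\<^sub>\<infinity>g\<in>G. integral T (\<lambda>t. (cmod (hinner f (exp_op A t g)))\<^sup>2)) \<and>
      (\<Sum>\<^sub>\<infinity>g\<in>G. integral T (\<lambda>t. (cmod (hinner f (exp_op A t g)))\<^sup>2)) \<le> C * (norm f)\<^sup>2)"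

end

theory Submission
  imports Defs
begin

text \<open>For fixed \<open>f\<close>, every finite partial sum \<open>t \<mapsto> \<Sum>\<^sub>g\<^sub>\<in>\<^sub>F |\<langle>f, e\<^sup>t\<^sup>A g\<rangle>|\<^sup>2\<close>,
  \<open>F \<subseteq> G\<close>, is bounded on \<open>[0, L]\<close> by \<open>K \<parallel>f\<parallel>\<^sup>2\<close> and \<open>M \<parallel>f\<parallel>\<^sup>2\<close>-Lipschitz there, with
  \<open>K, M\<close> independent of \<open>f\<close>: the Bessel property of \<open>G\<close> survives bounded operators, and
  \<open>t \<mapsto> e\<^sup>t\<^sup>A\<close> is Lipschitz in operator norm.  For sampling points of mesh below \<open>\<delta>\<close> the integral
  over \<open>[0, L]\<close> is therefore at most \<open>\<delta>\<close> times the sampled sum plus \<open>M \<delta> L \<parallel>f\<parallel>\<^sup>2\<close>, so a lower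
  frame bound of the continuous system passes to every sufficiently fine sampling.  Conversely,
  each sampled value is controlled by the average of the integrand over a short interval next to
  it, which passes the lower bound of any single sampling back to the integral.  Upper bounds
  come for free from the Bessel property.\<close>

section \<open>Complex inner product spaces\<close>

lemma hinner_add_right: "hinner (x::'a::complex_inner_space) (y + z) = hinner x y + hinner x z"
  by (metis hinner_commute hinner_add_left complex_cnj_add)

lemma hinner_scale_right: "hinner (x::'a::complex_inner_space) (hscale a y) = cnj a * hinner x y"
  by (metis hinner_commute hinner_scale_left complex_cnj_mult complex_cnj_cnj)

lemma hinner_zero_left [simp]: "hinner (0::'a::complex_inner_space) y = 0"
  using hinner_add_left[of "0::'a" 0 y] by simp

lemma hinner_zero_right [simp]: "hinner (x::'a::complex_inner_space) 0 = 0"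
  using hinner_add_right[of x 0 0] by simp

lemma hinner_diff_left: "hinner ((x::'a::complex_inner_space) - y) z = hinner x z - hinner y z"
  using hinner_add_left[of "x - y" y z] by (simp add: eq_diff_eq)

lemma hinner_diff_right: "hinner (x::'a::complex_inner_space) (y - z) = hinner x y - hinner x z"
  using hinner_add_right[of x "y - z" z] by (simp add: eq_diff_eq)

lemma hinner_sum_left: "hinner (\<Sum>i\<in>F. f i) (y::'a::complex_inner_space) = (\<Sum>i\<in>F. hinner (f i) y)"
  by (induction F rule: infinite_finite_induct) (simp_all add: hinner_add_left)

lemma hinner_sum_right: "hinner (y::'a::complex_inner_space) (\<Sum>i\<in>F. f i) = (\<Sum>i\<in>F. hinner y (f i))"
  by (induction F rule: infinite_finite_induct) (simp_all add: hinner_add_right)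

lemma norm_hscale: "norm (hscale c (x::'a::complex_inner_space)) = cmod c * norm x"
proof -
  have "complex_of_real ((norm (hscale c x))\<^sup>2) = hinner (hscale c x) (hscale c x)"
    by (rule hinner_self_norm[symmetric])
  also have "\<dots> = (c * cnj c) * hinner x x"
    by (simp add: hinner_scale_left hinner_scale_right mult.assoc)
  also have "\<dots> = complex_of_real ((cmod c * norm x)\<^sup>2)"
    by (simp add: hinner_self_norm power_mult_distrib flip: complex_norm_square)
  finally have "(norm (hscale c x))\<^sup>2 = (cmod c * norm x)\<^sup>2" by (simp only: of_real_eq_iff)
  then show ?thesis by (simp add: power2_eq_iff_nonneg)
qed

lemma hscale_scaleR: "hscale c (r *\<^sub>R (x::'a::complex_inner_space)) = r *\<^sub>R hscale c x"
  by (metis hscale_of_real hscale_hscale mult.commute)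

lemma bounded_linear_hscale: "bounded_linear (hscale c :: 'a::complex_inner_space \<Rightarrow> 'a)"
  by (rule bounded_linear_intro[where K="cmod c"])
    (simp_all add: hscale_add_right hscale_scaleR norm_hscale mult.commute)

lemma hinner_cauchy_schwarz: "cmod (hinner x y) \<le> norm x * norm (y::'a::complex_inner_space)"
proof (cases "y = 0")
  case False
  define c where "c = hinner x y / complex_of_real ((norm y)\<^sup>2)"
  define z where "z = x - hscale c y"
  have ny: "norm y > 0" using False by simp
  have zy: "hinner z y = 0"
    using ny by (simp add: z_def hinner_diff_left hinner_scale_left hinner_self_norm c_def)
  then have yz: "hinner y z = 0" by (metis hinner_commute complex_cnj_zero)
  have "hinner x x = hinner (z + hscale c y) (z + hscale c y)" by (simp add: z_def)
  also have "\<dots> = hinner z z + c * cnj c * hinner y y"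
    by (simp add: hinner_add_left hinner_add_right hinner_scale_left hinner_scale_right zy yz)
  also have "\<dots> = complex_of_real ((norm z)\<^sup>2 + (cmod c)\<^sup>2 * (norm y)\<^sup>2)"
    by (simp add: hinner_self_norm flip: complex_norm_square)
  finally have "(cmod c)\<^sup>2 * (norm y)\<^sup>2 \<le> (norm x)\<^sup>2"
    by (simp only: hinner_self_norm of_real_eq_iff) simp
  moreover have "cmod (hinner x y) = cmod c * (norm y)\<^sup>2"
    using ny by (simp add: c_def norm_divide norm_power)
  ultimately have "(cmod (hinner x y))\<^sup>2 \<le> (norm x * norm y)\<^sup>2"
    using mult_right_mono[of "(cmod c)\<^sup>2 * (norm y)\<^sup>2" "(norm x)\<^sup>2" "(norm y)\<^sup>2"]
    by (simp add: power_mult_distrib power2_eq_square mult_ac)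
  then show ?thesis by (rule power2_le_imp_le) simp
qed simp

definition clinear_op :: "('a::complex_inner_space \<Rightarrow> 'a) \<Rightarrow> bool" where
  "clinear_op B \<longleftrightarrow> (\<forall>x y. B (x + y) = B x + B y) \<and> (\<forall>c x. B (hscale c x) = hscale c (B x))"

lemma clinear_op_zero: "clinear_op B \<Longrightarrow> B 0 = 0"
  unfolding clinear_op_def by (metis add_cancel_right_right add_0)

lemma clinear_op_sum: "clinear_op B \<Longrightarrow> B (\<Sum>i\<in>F. f i) = (\<Sum>i\<in>F. B (f i))"
  by (induction F rule: infinite_finite_induct) (simp_all add: clinear_op_zero, simp add: clinear_op_def)

lemma clinear_op_funpow: "clinear_op A \<Longrightarrow> clinear_op (A ^^ n)"
  by (induction n) (simp_all add: clinear_op_def)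

lemma clinear_op_diff: "clinear_op P \<Longrightarrow> clinear_op Q \<Longrightarrow> clinear_op (\<lambda>x. P x - Q x)"
  unfolding clinear_op_def
  by (simp add: linear_diff[OF bounded_linear.linear[OF bounded_linear_hscale]] algebra_simps)

definition bessel_bound :: "real \<Rightarrow> 'a::complex_inner_space set \<Rightarrow> bool" where
  "bessel_bound C G \<longleftrightarrow>
     (\<forall>F f. finite F \<and> F \<subseteq> G \<longrightarrow> (\<Sum>g\<in>F. (cmod (hinner f g))\<^sup>2) \<le> C * (norm f)\<^sup>2)"

lemma bessel_systemE:
  assumes "bessel_system G"
  obtains C where "C > 0" "bessel_bound C G"
proof -
  obtain C where "C > 0" and C: "\<And>f. (\<lambda>g. (cmod (hinner f g))\<^sup>2) summable_on G \<and>
      (\<Sum>\<^sub>\<infinity>g\<in>G. (cmod (hinner f g))\<^sup>2) \<le> C * (norm f)\<^sup>2"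
    using assms unfolding bessel_system_def by blast
  have "bessel_bound C G"
    unfolding bessel_bound_def
  proof (intro allI impI)
    fix F f assume "finite F \<and> F \<subseteq> G"
    then show "(\<Sum>g\<in>F. (cmod (hinner f g))\<^sup>2) \<le> C * (norm f)\<^sup>2"
      using finite_sum_le_infsum[of "\<lambda>g. (cmod (hinner f g))\<^sup>2" G F] C[of f] by simp
  qed
  with \<open>C > 0\<close> show thesis by (rule that)
qed

lemma norm_synthesis_le:
  assumes "bessel_bound C G" "C \<ge> 0" "finite F" "F \<subseteq> G"
  shows "norm (\<Sum>g\<in>F. hscale (a g) g) \<le> sqrt C * L2_set (\<lambda>g. cmod (a g)) F"
proof -
  define x where "x = (\<Sum>g\<in>F. hscale (a g) g)"
  have "norm x * norm x = cmod (hinner x x)"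
    by (simp add: hinner_self_norm power2_eq_square norm_mult)
  also have "hinner x x = (\<Sum>g\<in>F. a g * hinner g x)"
    by (simp add: x_def hinner_sum_left hinner_scale_left)
  also have "cmod \<dots> \<le> (\<Sum>g\<in>F. \<bar>cmod (a g)\<bar> * \<bar>cmod (hinner x g)\<bar>)"
    by (rule order_trans[OF norm_sum]) (simp add: norm_mult hinner_commute[of _ x])
  also have "\<dots> \<le> L2_set (\<lambda>g. cmod (a g)) F * L2_set (\<lambda>g. cmod (hinner x g)) F"
    by (rule L2_set_mult_ineq)
  also have "\<dots> \<le> L2_set (\<lambda>g. cmod (a g)) F * (sqrt C * norm x)"
  proof (rule mult_left_mono)
    have "L2_set (\<lambda>g. cmod (hinner x g)) F \<le> sqrt (C * (norm x)\<^sup>2)"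
      using assms unfolding L2_set_def bessel_bound_def by simp
    then show "L2_set (\<lambda>g. cmod (hinner x g)) F \<le> sqrt C * norm x"
      by (simp add: real_sqrt_mult)
  qed simp
  finally have "norm x * norm x \<le> (sqrt C * L2_set (\<lambda>g. cmod (a g)) F) * norm x"
    by (simp add: mult_ac)
  then have "norm x \<le> sqrt C * L2_set (\<lambda>g. cmod (a g)) F"
    using \<open>C \<ge> 0\<close> by (cases "norm x = 0") (auto elim: mult_right_le_imp_le)
  then show ?thesis by (simp add: x_def)
qed

lemma bessel_bound_image:
  assumes "bessel_bound C G" "C \<ge> 0" and "clinear_op B"
    and B_bound: "\<And>x. norm (B x) \<le> K * norm x" and "K \<ge> 0" and "finite F" "F \<subseteq> G"
  shows "(\<Sum>g\<in>F. (cmod (hinner f (B g)))\<^sup>2) \<le> C * K\<^sup>2 * (norm f)\<^sup>2"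
proof -
  define a where "a g = hinner f (B g)" for g
  define S where "S = (\<Sum>g\<in>F. (cmod (a g))\<^sup>2)"
  define x where "x = (\<Sum>g\<in>F. hscale (a g) g)"
  have S_nonneg: "S \<ge> 0" unfolding S_def by (simp add: sum_nonneg)
  \<comment> \<open>duality: \<open>S = \<langle>f, B x\<rangle>\<close>, so \<open>S \<le> \<parallel>f\<parallel> K \<parallel>x\<parallel> \<le> \<parallel>f\<parallel> K \<surd>C \<surd>S\<close> by the synthesis bound\<close>
  have "hinner f (B x) = (\<Sum>g\<in>F. cnj (a g) * a g)"
    using \<open>clinear_op B\<close> unfolding x_def clinear_op_sum[OF \<open>clinear_op B\<close>]
    by (simp add: clinear_op_def hinner_sum_right hinner_scale_right a_def)
  also have "\<dots> = complex_of_real S"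
    unfolding S_def of_real_sum
    by (rule sum.cong[OF refl]) (metis complex_norm_square mult.commute)
  finally have "S = cmod (hinner f (B x))" using S_nonneg by simp
  also have "\<dots> \<le> norm f * (K * norm x)"
    by (rule order_trans[OF hinner_cauchy_schwarz mult_left_mono[OF B_bound]]) simp
  also have "\<dots> \<le> norm f * (K * (sqrt C * sqrt S))"
  proof -
    have "norm x \<le> sqrt C * sqrt S"
      using norm_synthesis_le[OF assms(1,2,6,7), of a] by (simp add: L2_set_def S_def x_def)
    then show ?thesis using \<open>K \<ge> 0\<close> by (simp add: mult_left_mono)
  qed
  finally have S_le: "sqrt S * sqrt S \<le> (norm f * K * sqrt C) * sqrt S"
    using S_nonneg by (simp add: mult_ac)
  have "sqrt S \<le> norm f * K * sqrt C"
  proof (cases "S = 0")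
    case False
    with S_nonneg have "sqrt S > 0" by simp
    with S_le show ?thesis by (rule mult_right_le_imp_le)
  qed (use \<open>K \<ge> 0\<close> \<open>C \<ge> 0\<close> in simp)
  then have "(sqrt S)\<^sup>2 \<le> (norm f * K * sqrt C)\<^sup>2"
    by (rule power_mono) (use S_nonneg in simp)
  then show ?thesis
    using S_nonneg \<open>C \<ge> 0\<close> by (simp add: S_def a_def power_mult_distrib mult_ac)
qed

lemma sum_hinner_sq_diff_le:
  assumes "bessel_bound C G" "C \<ge> 0" and "clinear_op P" "clinear_op Q"
    and "\<And>x. norm (P x) \<le> E * norm x" "\<And>x. norm (Q x) \<le> E * norm x" "E \<ge> 0"
    and "\<And>x. norm (P x - Q x) \<le> D * norm x" "D \<ge> 0"
    and "finite F" "F \<subseteq> G"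
  shows "\<bar>(\<Sum>g\<in>F. (cmod (hinner f (P g)))\<^sup>2) - (\<Sum>g\<in>F. (cmod (hinner f (Q g)))\<^sup>2)\<bar>
           \<le> 2 * C * E * D * (norm f)\<^sup>2"
proof -
  define a where "a g = cmod (hinner f (P g))" for g
  define b where "b g = cmod (hinner f (Q g))" for g
  define d where "d g = cmod (hinner f (P g - Q g))" for g
  have L2_le: "L2_set (\<lambda>g. cmod (hinner f (R g))) F \<le> sqrt C * K * norm f"
    if "clinear_op R" "\<And>x. norm (R x) \<le> K * norm x" "K \<ge> 0" for R K
  proof -
    have "L2_set (\<lambda>g. cmod (hinner f (R g))) F \<le> sqrt (C * K\<^sup>2 * (norm f)\<^sup>2)"
      unfolding L2_set_def
      by (rule real_sqrt_le_mono, rule bessel_bound_image) (use assms that in auto)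
    then show ?thesis using that(3) by (simp add: real_sqrt_mult)
  qed
  have "\<bar>(\<Sum>g\<in>F. (a g)\<^sup>2) - (\<Sum>g\<in>F. (b g)\<^sup>2)\<bar> \<le> (\<Sum>g\<in>F. \<bar>(a g)\<^sup>2 - (b g)\<^sup>2\<bar>)"
    by (simp add: sum_abs flip: sum_subtractf)
  also have "\<dots> \<le> (\<Sum>g\<in>F. \<bar>a g + b g\<bar> * \<bar>d g\<bar>)"
  proof (rule sum_mono)
    fix g
    have "\<bar>a g - b g\<bar> \<le> d g"
      unfolding a_def b_def d_def hinner_diff_right by (rule norm_triangle_ineq3)
    then show "\<bar>(a g)\<^sup>2 - (b g)\<^sup>2\<bar> \<le> \<bar>a g + b g\<bar> * \<bar>d g\<bar>"
      by (simp add: power2_eq_square square_diff_square_factored abs_mult mult_left_mono)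
  qed
  also have "\<dots> \<le> L2_set (\<lambda>g. a g + b g) F * L2_set d F"
    by (rule L2_set_mult_ineq)
  also have "\<dots> \<le> (L2_set a F + L2_set b F) * L2_set d F"
    by (simp add: L2_set_triangle_ineq mult_right_mono)
  also have "\<dots> \<le> (sqrt C * E * norm f + sqrt C * E * norm f) * (sqrt C * D * norm f)"
    unfolding a_def b_def d_def
    by (intro mult_mono add_mono L2_le clinear_op_diff) (use assms in auto)
  also have "\<dots> = 2 * C * E * D * (norm f)\<^sup>2"
    using \<open>C \<ge> 0\<close> by (simp add: power2_eq_square algebra_simps)
  finally show ?thesis by (simp add: a_def b_def)
qed

section \<open>The operator exponential\<close>

instance complex_hilbert_space \<subseteq> banach ..

lemma norm_funpow_le:
  fixes A :: "'a::real_normed_vector \<Rightarrow> 'a"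
  assumes "\<And>x. norm (A x) \<le> K * norm x" "K \<ge> 0"
  shows "norm ((A ^^ n) x) \<le> K ^ n * norm x"
proof (induction n)
  case (Suc n)
  have "norm ((A ^^ Suc n) x) \<le> K * norm ((A ^^ n) x)" using assms(1)[of "(A ^^ n) x"] by simp
  also have "\<dots> \<le> K * (K ^ n * norm x)" by (rule mult_left_mono[OF Suc assms(2)])
  finally show ?case by (simp add: mult.assoc)
qed simp

lemma
  fixes A :: "'a::banach \<Rightarrow> 'a"
  assumes A_bound: "\<And>x. norm (A x) \<le> K * norm x" "K \<ge> 0"
    and summable_coeffs: "summable (\<lambda>n. \<bar>c n\<bar> * K ^ n)"
  shows summable_op_power_series: "summable (\<lambda>n. c n *\<^sub>R (A ^^ n) x)"
    and norm_op_power_series_le: "norm (\<Sum>n. c n *\<^sub>R (A ^^ n) x) \<le> (\<Sum>n. \<bar>c n\<bar> * K ^ n) * norm x"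
proof -
  have term_le: "norm (c n *\<^sub>R (A ^^ n) x) \<le> \<bar>c n\<bar> * K ^ n * norm x" for n
    using mult_left_mono[OF norm_funpow_le[OF A_bound, of n x], of "\<bar>c n\<bar>"] by (simp add: mult.assoc)
  have majorant: "summable (\<lambda>n. \<bar>c n\<bar> * K ^ n * norm x)" by (rule summable_mult2[OF summable_coeffs])
  have norm_summable: "summable (\<lambda>n. norm (c n *\<^sub>R (A ^^ n) x))"
    by (rule summable_comparison_test'[OF majorant]) (use term_le in simp)
  show "summable (\<lambda>n. c n *\<^sub>R (A ^^ n) x)" by (rule summable_norm_cancel[OF norm_summable])
  have "norm (\<Sum>n. c n *\<^sub>R (A ^^ n) x) \<le> (\<Sum>n. norm (c n *\<^sub>R (A ^^ n) x))"
    by (rule summable_norm[OF norm_summable])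
  also have "\<dots> \<le> (\<Sum>n. \<bar>c n\<bar> * K ^ n * norm x)"
    by (rule suminf_le[OF term_le norm_summable majorant])
  also have "\<dots> = (\<Sum>n. \<bar>c n\<bar> * K ^ n) * norm x" by (rule suminf_mult2[OF summable_coeffs, symmetric])
  finally show "norm (\<Sum>n. c n *\<^sub>R (A ^^ n) x) \<le> (\<Sum>n. \<bar>c n\<bar> * K ^ n) * norm x" .
qed

lemma clinear_op_power_series:
  fixes A :: "'a::complex_hilbert_space \<Rightarrow> 'a"
  assumes A: "clinear_op A" and A_bound: "\<And>x. norm (A x) \<le> K * norm x" "K \<ge> 0"
    and summable_coeffs: "summable (\<lambda>n. \<bar>c n\<bar> * K ^ n)"
  shows "clinear_op (\<lambda>x. \<Sum>n. c n *\<^sub>R (A ^^ n) x)"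
proof -
  note summable = summable_op_power_series[OF A_bound summable_coeffs]
  have "(\<Sum>n. c n *\<^sub>R (A ^^ n) (x + y)) = (\<Sum>n. c n *\<^sub>R (A ^^ n) x) + (\<Sum>n. c n *\<^sub>R (A ^^ n) y)" for x y
  proof -
    have "(\<Sum>n. c n *\<^sub>R (A ^^ n) (x + y)) = (\<Sum>n. c n *\<^sub>R (A ^^ n) x + c n *\<^sub>R (A ^^ n) y)"
      using clinear_op_funpow[OF A] by (simp add: clinear_op_def scaleR_add_right)
    also have "\<dots> = (\<Sum>n. c n *\<^sub>R (A ^^ n) x) + (\<Sum>n. c n *\<^sub>R (A ^^ n) y)"
      by (rule suminf_add[OF summable summable, symmetric])
    finally show ?thesis .
  qed
  moreover have "(\<Sum>n. c n *\<^sub>R (A ^^ n) (hscale d x)) = hscale d (\<Sum>n. c n *\<^sub>R (A ^^ n) x)" for d x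
  proof -
    have "hscale d (\<Sum>n. c n *\<^sub>R (A ^^ n) x) = (\<Sum>n. hscale d (c n *\<^sub>R (A ^^ n) x))"
      by (rule bounded_linear.suminf[OF bounded_linear_hscale summable])
    also have "\<dots> = (\<Sum>n. c n *\<^sub>R (A ^^ n) (hscale d x))"
      using clinear_op_funpow[OF A] by (simp add: clinear_op_def hscale_scaleR)
    finally show ?thesis by simp
  qed
  ultimately show ?thesis unfolding clinear_op_def by blast
qed

lemma exp_series_real: "(\<lambda>n. y ^ n / fact n :: real) sums exp y"
  using exp_converges[of y] by (simp add: divide_inverse mult.commute)

lemma summable_exp_coeffs: "K \<ge> 0 \<Longrightarrow> summable (\<lambda>n. \<bar>t ^ n / fact n\<bar> * K ^ n :: real)"
  using sums_summable[OF exp_series_real[of "\<bar>t\<bar> * K"]]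
  by (simp add: power_mult_distrib abs_mult power_abs)

lemma clinear_op_exp_op:
  fixes A :: "'a::complex_hilbert_space \<Rightarrow> 'a"
  assumes "clinear_op A" "\<And>x. norm (A x) \<le> K * norm x" "K \<ge> 0"
  shows "clinear_op (exp_op A t)"
  using clinear_op_power_series[OF assms summable_exp_coeffs[OF assms(3)]]
  by (simp add: exp_op_def[abs_def])

lemma norm_exp_op_le:
  fixes A :: "'a::complex_hilbert_space \<Rightarrow> 'a"
  assumes A_bound: "\<And>x. norm (A x) \<le> K * norm x" "K \<ge> 0"
    and "0 \<le> t" "t \<le> R"
  shows "norm (exp_op A t x) \<le> exp (R * K) * norm x"
proof -
  have coeff_le: "\<bar>t ^ n / fact n\<bar> * K ^ n \<le> (R * K) ^ n / fact n" for n
    using assms by (simp add: abs_divide power_mult_distrib divide_right_mono mult_right_mono power_mono)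
  have "norm (exp_op A t x) \<le> (\<Sum>n. \<bar>t ^ n / fact n\<bar> * K ^ n) * norm x"
    unfolding exp_op_def by (rule norm_op_power_series_le[OF A_bound summable_exp_coeffs[OF A_bound(2)]])
  also have "(\<Sum>n. \<bar>t ^ n / fact n\<bar> * K ^ n) \<le> exp (R * K)"
    using suminf_le[OF coeff_le summable_exp_coeffs[OF A_bound(2)] sums_summable[OF exp_series_real]]
    by (simp add: sums_iff[THEN iffD1, OF exp_series_real])
  finally show ?thesis by (simp add: mult_right_mono)
qed

lemma abs_power_diff_le:
  fixes s t R :: real
  assumes "0 \<le> s" "s \<le> R" "0 \<le> t" "t \<le> R" "1 \<le> R"
  shows "\<bar>t ^ n - s ^ n\<bar> \<le> \<bar>t - s\<bar> * (2 * R) ^ n"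
proof -
  have "\<bar>\<Sum>i<n. s ^ (n - Suc i) * t ^ i\<bar> \<le> (\<Sum>i<n. R ^ (n - Suc i) * R ^ i)"
    by (rule order_trans[OF sum_abs], rule sum_mono)
      (use assms in \<open>auto simp: abs_mult power_abs intro!: mult_mono power_mono\<close>)
  also have "\<dots> = real n * R ^ (n - 1)"
    by (simp flip: power_add)
  also have "\<dots> \<le> 2 ^ n * R ^ n"
  proof (rule mult_mono)
    show "real n \<le> 2 ^ n" using less_exp[of n] by (metis of_nat_le_iff of_nat_numeral of_nat_power less_imp_le)
    show "R ^ (n - 1) \<le> R ^ n" by (rule power_increasing) (use assms in auto)
  qed (use assms in auto)
  finally have "\<bar>t ^ n - s ^ n\<bar> \<le> \<bar>t - s\<bar> * (2 ^ n * R ^ n)"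
    by (subst power_diff_sumr2) (simp add: abs_mult mult_left_mono)
  then show ?thesis by (simp add: power_mult_distrib)
qed

lemma norm_exp_op_diff_le:
  fixes A :: "'a::complex_hilbert_space \<Rightarrow> 'a"
  assumes A_bound: "\<And>x. norm (A x) \<le> K * norm x" "K \<ge> 0"
    and "0 \<le> s" "s \<le> R" "0 \<le> t" "t \<le> R" "1 \<le> R"
  shows "norm (exp_op A t x - exp_op A s x) \<le> \<bar>t - s\<bar> * exp (2 * R * K) * norm x"
proof -
  define c where "c n = (t ^ n - s ^ n) / fact n" for n
  have coeff_le: "\<bar>c n\<bar> * K ^ n \<le> \<bar>t - s\<bar> * ((2 * R * K) ^ n / fact n)" for n
  proof -
    have "\<bar>c n\<bar> * K ^ n = \<bar>t ^ n - s ^ n\<bar> * K ^ n / fact n" by (simp add: c_def abs_divide)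
    also have "\<dots> \<le> \<bar>t - s\<bar> * (2 * R) ^ n * K ^ n / fact n"
      by (intro divide_right_mono mult_right_mono abs_power_diff_le) (use assms in auto)
    finally show ?thesis by (simp add: power_mult_distrib)
  qed
  have majorant: "(\<lambda>n. \<bar>t - s\<bar> * ((2 * R * K) ^ n / fact n)) sums (\<bar>t - s\<bar> * exp (2 * R * K))"
    by (rule sums_mult[OF exp_series_real])
  have summable_c: "summable (\<lambda>n. \<bar>c n\<bar> * K ^ n)"
    by (rule summable_comparison_test'[OF sums_summable[OF majorant]]) (use coeff_le A_bound(2) in simp)
  have "exp_op A t x - exp_op A s x
      = (\<Sum>n. (t ^ n / fact n) *\<^sub>R (A ^^ n) x - (s ^ n / fact n) *\<^sub>R (A ^^ n) x)"
    unfolding exp_op_def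
    by (intro suminf_diff summable_op_power_series[OF A_bound summable_exp_coeffs[OF A_bound(2)]])
  also have "\<dots> = (\<Sum>n. c n *\<^sub>R (A ^^ n) x)"
    by (simp add: c_def diff_divide_distrib scaleR_diff_left)
  finally have "norm (exp_op A t x - exp_op A s x) \<le> (\<Sum>n. \<bar>c n\<bar> * K ^ n) * norm x"
    using norm_op_power_series_le[OF A_bound summable_c, of x] by simp
  also have "(\<Sum>n. \<bar>c n\<bar> * K ^ n) \<le> \<bar>t - s\<bar> * exp (2 * R * K)"
    using suminf_le[OF coeff_le summable_c sums_summable[OF majorant]] sums_unique[OF majorant]
    by linarith
  finally show ?thesis by (simp add: mult_right_mono)
qed

section \<open>Sampling versus integrating a Lipschitz family\<close>

definition ordered_samples :: "real \<Rightarrow> nat \<Rightarrow> (nat \<Rightarrow> real) \<Rightarrow> bool" where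
  "ordered_samples L n t \<longleftrightarrow> 1 \<le> n \<and> t 1 = 0 \<and> (\<forall>j\<in>{1..<n}. t j < t (Suc j)) \<and> t n \<le> L"

definition samples_mesh_less :: "real \<Rightarrow> real \<Rightarrow> nat \<Rightarrow> (nat \<Rightarrow> real) \<Rightarrow> bool" where
  "samples_mesh_less \<delta> L n t \<longleftrightarrow> (\<forall>j\<in>{1..<n}. \<bar>t (Suc j) - t j\<bar> < \<delta>) \<and> \<bar>L - t n\<bar> < \<delta>"

lemma ordered_samples_less:
  assumes "ordered_samples L n t" "1 \<le> j" "j < k" "k \<le> n"
  shows "t j < t k"
  using assms(3,4)
proof (induction k)
  case (Suc k)
  have "t k < t (Suc k)" using assms(1,2) Suc.prems by (auto simp: ordered_samples_def)
  then show ?case using Suc by (cases "j = k") auto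
qed simp

lemma ordered_samples_range:
  assumes "ordered_samples L n t"
  shows "t ` {1..n} \<subseteq> {0..L}"
proof
  fix x assume "x \<in> t ` {1..n}"
  then obtain j where j: "1 \<le> j" "j \<le> n" "x = t j" by auto
  have "t 1 \<le> t j" using ordered_samples_less[OF assms, of 1 j] j by (cases "j = 1") auto
  moreover have "t j \<le> t n" using ordered_samples_less[OF assms, of j n] j by (cases "j = n") auto
  ultimately show "x \<in> {0..L}" using assms j by (auto simp: ordered_samples_def)
qed

lemma ordered_samples_inj_on:
  assumes "ordered_samples L n t"
  shows "inj_on t {1..n}"
  by (rule linorder_inj_onI) (use ordered_samples_less[OF assms] in fastforce)+

lemma uniform_samples_exist:
  assumes "0 < L" "0 < \<delta>"
  obtains n t where "ordered_samples L n t" "samples_mesh_less \<delta> L n t"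
proof -
  define n where "n = nat \<lceil>L / \<delta>\<rceil> + 1"
  define step where "step = L / real n"
  define t where "t j = real (j - 1) * step" for j
  have "1 \<le> n" by (simp add: n_def)
  have "L / \<delta> < real n" by (simp add: n_def) linarith
  then have "0 < step" "step < \<delta>"
    using assms \<open>1 \<le> n\<close> by (simp_all add: step_def field_simps)
  have t_Suc: "t (Suc j) = t j + step" if "1 \<le> j" for j
    using that by (simp add: t_def of_nat_diff algebra_simps)
  have "t n = L - step"
    using \<open>1 \<le> n\<close> by (simp add: t_def step_def of_nat_diff field_simps)
  moreover have "t 1 = 0" by (simp add: t_def)
  ultimately show thesis
    using \<open>1 \<le> n\<close> \<open>0 < step\<close> \<open>step < \<delta>\<close> t_Suc
    by (intro that) (auto simp: ordered_samples_def samples_mesh_less_def)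
qed

locale lipschitz_sum_family =
  fixes h :: "'g \<Rightarrow> real \<Rightarrow> real" and G :: "'g set" and L B \<Lambda> :: real
  assumes L_pos: "0 < L"
    and nonneg: "\<And>g t. 0 \<le> h g t"
    and sum_bounded: "\<And>F t. finite F \<Longrightarrow> F \<subseteq> G \<Longrightarrow> t \<in> {0..L} \<Longrightarrow> (\<Sum>g\<in>F. h g t) \<le> B"
    and sum_lipschitz: "\<And>F s t. finite F \<Longrightarrow> F \<subseteq> G \<Longrightarrow> s \<in> {0..L} \<Longrightarrow> t \<in> {0..L} \<Longrightarrow>
           \<bar>(\<Sum>g\<in>F. h g t) - (\<Sum>g\<in>F. h g s)\<bar> \<le> \<Lambda> * \<bar>t - s\<bar>"
begin

definition partial_sum :: "'g set \<Rightarrow> real \<Rightarrow> real" where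
  "partial_sum F t = (\<Sum>g\<in>F. h g t)"

lemma lipschitz_const_nonneg: "0 \<le> \<Lambda>"
  using sum_lipschitz[of "{}" 0 L] L_pos by (simp add: zero_le_mult_iff)

lemma partial_sum_nonneg: "0 \<le> partial_sum F t"
  unfolding partial_sum_def by (simp add: sum_nonneg nonneg)

lemma partial_sum_integrable:
  assumes "finite F" "F \<subseteq> G" "0 \<le> a" "b \<le> L"
  shows "partial_sum F integrable_on {a..b}"
proof -
  have "\<Lambda>-lipschitz_on {0..L} (partial_sum F)"
    using sum_lipschitz[OF assms(1,2)] lipschitz_const_nonneg
    by (intro lipschitz_onI) (simp_all add: partial_sum_def dist_real_def)
  then have "continuous_on {a..b} (partial_sum F)"
    by (rule continuous_on_subset[OF lipschitz_on_continuous_on]) (use assms in auto)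
  then show ?thesis by (rule integrable_continuous_interval)
qed

lemma integrable_summand:
  assumes "g \<in> G" "0 \<le> a" "b \<le> L"
  shows "h g integrable_on {a..b}"
proof -
  have "partial_sum {g} = h g" by (simp add: partial_sum_def fun_eq_iff)
  then show ?thesis using partial_sum_integrable[of "{g}" a b] assms by simp
qed

lemma integral_sum_eq_integral_partial_sum:
  assumes "finite F" "F \<subseteq> G" "0 \<le> a" "b \<le> L"
  shows "(\<Sum>g\<in>F. integral {a..b} (h g)) = integral {a..b} (partial_sum F)"
  unfolding partial_sum_def using assms integrable_summand by (intro integral_sum[symmetric]) auto

lemma integral_partial_sum_le:
  assumes "finite F" "F \<subseteq> G" "0 \<le> a" "a \<le> b" "b \<le> L"
  shows "integral {a..b} (partial_sum F) \<le> (b - a) * (partial_sum F a + \<Lambda> * (b - a))"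
proof -
  have "integral {a..b} (partial_sum F) \<le> integral {a..b} (\<lambda>_. partial_sum F a + \<Lambda> * (b - a))"
  proof (rule integral_le[OF partial_sum_integrable[OF assms(1,2,3,5)] integrable_const_ivl])
    fix x assume x: "x \<in> {a..b}"
    have "\<bar>partial_sum F x - partial_sum F a\<bar> \<le> \<Lambda> * (x - a)"
      using sum_lipschitz[OF assms(1,2), of a x] x assms by (simp add: partial_sum_def)
    also have "\<dots> \<le> \<Lambda> * (b - a)" using x lipschitz_const_nonneg by (simp add: mult_left_mono)
    finally show "partial_sum F x \<le> partial_sum F a + \<Lambda> * (b - a)" by simp
  qed
  then show ?thesis using assms by simp
qed

lemma integral_partial_sum_ge:
  assumes "finite F" "F \<subseteq> G" "0 \<le> a" "a \<le> b" "b \<le> L" "s \<in> {0..L}"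
    and near: "\<And>x. x \<in> {a..b} \<Longrightarrow> \<bar>x - s\<bar> \<le> e"
  shows "(b - a) * (partial_sum F s - \<Lambda> * e) \<le> integral {a..b} (partial_sum F)"
proof -
  have "integral {a..b} (\<lambda>_. partial_sum F s - \<Lambda> * e) \<le> integral {a..b} (partial_sum F)"
  proof (rule integral_le[OF integrable_const_ivl partial_sum_integrable[OF assms(1,2,3,5)]])
    fix x assume x: "x \<in> {a..b}"
    have "\<bar>partial_sum F x - partial_sum F s\<bar> \<le> \<Lambda> * \<bar>x - s\<bar>"
      using sum_lipschitz[OF assms(1,2), of s x] x assms by (simp add: partial_sum_def)
    also have "\<dots> \<le> \<Lambda> * e" using near[OF x] lipschitz_const_nonneg by (simp add: mult_left_mono)
    finally show "partial_sum F s - \<Lambda> * e \<le> partial_sum F x" by simp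
  qed
  then show ?thesis using assms by simp
qed

context
  fixes T assumes T: "finite T" "T \<subseteq> {0..L}"
begin

lemma sum_samples_le_sum_partial_sums:
  assumes "finite W" "W \<subseteq> G \<times> T"
  shows "(\<Sum>(g,s)\<in>W. h g s) \<le> (\<Sum>s\<in>T. partial_sum (fst ` W) s)"
proof -
  have "(\<Sum>(g,s)\<in>W. h g s) \<le> (\<Sum>(g,s)\<in>fst ` W \<times> T. h g s)"
    by (rule sum_mono2) (use assms T nonneg in \<open>force simp: split_beta\<close>)+
  also have "\<dots> = (\<Sum>s\<in>T. partial_sum (fst ` W) s)"
    unfolding partial_sum_def using assms T
    by (simp add: sum.cartesian_product[symmetric] sum.swap[of _ "fst ` W"])
  finally show ?thesis .
qed

lemma infsum_samples_le_if:
  assumes "\<And>F. finite F \<Longrightarrow> F \<subseteq> G \<Longrightarrow> (\<Sum>s\<in>T. partial_sum F s) \<le> C"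
  shows "(\<lambda>(g,s). h g s) summable_on (G \<times> T)" and "(\<Sum>\<^sub>\<infinity>(g,s)\<in>G \<times> T. h g s) \<le> C"
proof -
  have finite_le: "(\<Sum>(g,s)\<in>W. h g s) \<le> C" if "finite W" "W \<subseteq> G \<times> T" for W
    using sum_samples_le_sum_partial_sums[OF that] assms[of "fst ` W"] that by force
  show summable: "(\<lambda>(g,s). h g s) summable_on (G \<times> T)"
    by (rule nonneg_bdd_above_summable_on) (use nonneg finite_le in \<open>auto intro!: bdd_aboveI2\<close>)
  show "(\<Sum>\<^sub>\<infinity>(g,s)\<in>G \<times> T. h g s) \<le> C"
    by (rule infsum_le_finite_sums[OF summable]) (use finite_le in auto)
qed

lemma samples_summable: "(\<lambda>(g,s). h g s) summable_on (G \<times> T)"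
  and infsum_samples_le: "(\<Sum>\<^sub>\<infinity>(g,s)\<in>G \<times> T. h g s) \<le> card T * B"
proof -
  have "(\<Sum>s\<in>T. partial_sum F s) \<le> card T * B" if "finite F" "F \<subseteq> G" for F
    using sum_mono[of T "partial_sum F" "\<lambda>_. B"] sum_bounded[OF that] T
    by (force simp: partial_sum_def)
  then show "(\<lambda>(g,s). h g s) summable_on (G \<times> T)" "(\<Sum>\<^sub>\<infinity>(g,s)\<in>G \<times> T. h g s) \<le> card T * B"
    using infsum_samples_le_if by blast+
qed

lemma sum_partial_sums_le_infsum_samples:
  assumes "finite F" "F \<subseteq> G"
  shows "(\<Sum>s\<in>T. partial_sum F s) \<le> (\<Sum>\<^sub>\<infinity>(g,s)\<in>G \<times> T. h g s)"
proof -
  have "(\<Sum>(g,s)\<in>F \<times> T. h g s) \<le> (\<Sum>\<^sub>\<infinity>(g,s)\<in>G \<times> T. h g s)"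
    by (rule finite_sum_le_infsum[OF samples_summable]) (use assms T nonneg in auto)
  then show ?thesis
    unfolding partial_sum_def using assms T
    by (simp add: sum.cartesian_product[symmetric] sum.swap[of _ F])
qed

end

lemma infsum_integrals_le_if:
  assumes "\<And>F. finite F \<Longrightarrow> F \<subseteq> G \<Longrightarrow> integral {0..L} (partial_sum F) \<le> C"
  shows "(\<lambda>g. integral {0..L} (h g)) summable_on G"
    and "(\<Sum>\<^sub>\<infinity>g\<in>G. integral {0..L} (h g)) \<le> C"
proof -
  have finite_le: "(\<Sum>g\<in>F. integral {0..L} (h g)) \<le> C" if "finite F" "F \<subseteq> G" for F
    using integral_sum_eq_integral_partial_sum[OF that] assms[OF that] L_pos by simp
  have "0 \<le> integral {0..L} (h g)" for g
    using nonneg by (cases "h g integrable_on {0..L}") (simp_all add: integral_nonneg not_integrable_integral)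
  then show summable: "(\<lambda>g. integral {0..L} (h g)) summable_on G"
    by (intro nonneg_bdd_above_summable_on bdd_aboveI2) (use finite_le in auto)
  show "(\<Sum>\<^sub>\<infinity>g\<in>G. integral {0..L} (h g)) \<le> C"
    by (rule infsum_le_finite_sums[OF summable finite_le])
qed

lemma integrals_summable: "(\<lambda>g. integral {0..L} (h g)) summable_on G"
  and infsum_integrals_le: "(\<Sum>\<^sub>\<infinity>g\<in>G. integral {0..L} (h g)) \<le> L * B"
proof -
  have "integral {0..L} (partial_sum F) \<le> L * B" if "finite F" "F \<subseteq> G" for F
    using integral_le[OF partial_sum_integrable[OF that] integrable_const_ivl, of 0 L B]
      sum_bounded[OF that] L_pos
    by (auto simp: partial_sum_def)
  then show "(\<lambda>g. integral {0..L} (h g)) summable_on G" "(\<Sum>\<^sub>\<infinity>g\<in>G. integral {0..L} (h g)) \<le> L * B"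
    using infsum_integrals_le_if by blast+
qed

lemma integral_partial_sum_le_infsum_integrals:
  assumes "finite F" "F \<subseteq> G"
  shows "integral {0..L} (partial_sum F) \<le> (\<Sum>\<^sub>\<infinity>g\<in>G. integral {0..L} (h g))"
proof -
  have "0 \<le> integral {0..L} (h g)" for g
    using nonneg by (cases "h g integrable_on {0..L}") (simp_all add: integral_nonneg not_integrable_integral)
  then show ?thesis
    using finite_sum_le_infsum[OF integrals_summable, of F] assms
      integral_sum_eq_integral_partial_sum[OF assms, of 0 L] L_pos
    by simp
qed

end

context lipschitz_sum_family
begin

lemma infsum_samples_le_integrals:
  assumes T: "finite T" "T \<subseteq> {0..L}" and e: "0 < e" "e \<le> L"
  shows "e * (\<Sum>\<^sub>\<infinity>(g,s)\<in>G \<times> T. h g s)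
           \<le> card T * (\<Sum>\<^sub>\<infinity>g\<in>G. integral {0..L} (h g)) + card T * \<Lambda> * e\<^sup>2"
proof -
  let ?I = "\<Sum>\<^sub>\<infinity>g\<in>G. integral {0..L} (h g)"
  have "(\<Sum>\<^sub>\<infinity>(g,s)\<in>G \<times> T. h g s) \<le> (card T * ?I + card T * \<Lambda> * e\<^sup>2) / e"
  proof (rule infsum_samples_le_if[OF T])
    fix F assume F: "finite F" "F \<subseteq> G"
    \<comment> \<open>each sample point lies in a subinterval of \<open>[0, L]\<close> of length \<open>e\<close>\<close>
    have sample_le: "e * partial_sum F s \<le> ?I + \<Lambda> * e\<^sup>2" if "s \<in> T" for s
    proof -
      define a where "a = min s (L - e)"
      have s: "s \<in> {0..L}" using that T by auto
      have a: "0 \<le> a" "a \<le> a + e" "a + e \<le> L" using s e by (auto simp: a_def)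
      have "(a + e - a) * (partial_sum F s - \<Lambda> * e) \<le> integral {a..a + e} (partial_sum F)"
        by (rule integral_partial_sum_ge[OF F a s]) (use s in \<open>auto simp: a_def\<close>)
      also have "\<dots> \<le> integral {0..L} (partial_sum F)"
        by (rule integral_subset_le) (use a partial_sum_integrable[OF F] partial_sum_nonneg in auto)
      also have "\<dots> \<le> ?I" by (rule integral_partial_sum_le_infsum_integrals[OF F])
      finally show ?thesis by (simp add: algebra_simps power2_eq_square)
    qed
    have "e * (\<Sum>s\<in>T. partial_sum F s) \<le> (\<Sum>s\<in>T. ?I + \<Lambda> * e\<^sup>2)"
      unfolding sum_distrib_left by (rule sum_mono[OF sample_le])
    then show "(\<Sum>s\<in>T. partial_sum F s) \<le> (card T * ?I + card T * \<Lambda> * e\<^sup>2) / e"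
      using e by (simp add: field_simps)
  qed
  then show ?thesis using e by (simp add: field_simps)
qed

lemma integral_partial_sum_le_left_riemann_sum:
  assumes F: "finite F" "F \<subseteq> G" and t1: "t 1 = 0" and "1 \<le> k" "t k \<le> L"
    and steps: "\<And>j. 1 \<le> j \<Longrightarrow> j < k \<Longrightarrow> t j \<le> t (Suc j) \<and> t (Suc j) - t j < \<delta>"
  shows "integral {0..t k} (partial_sum F)
           \<le> \<delta> * (\<Sum>j\<in>{1..<k}. partial_sum F (t j)) + \<Lambda> * \<delta> * t k"
proof -
  have range: "t j \<in> {0..L}" if "1 \<le> j" "j \<le> k" for j
  proof -
    have "t 1 \<le> t j" using that(1)
      by (induction j rule: dec_induct) (use steps that in \<open>auto intro: order_trans\<close>)
    moreover have "t j \<le> t k" using that(2)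
      by (induction k rule: dec_induct) (use steps that in \<open>auto intro: order_trans\<close>)
    ultimately show ?thesis using assms by auto
  qed
  have "integral {0..t m} (partial_sum F)
          \<le> \<delta> * (\<Sum>j\<in>{1..<m}. partial_sum F (t j)) + \<Lambda> * \<delta> * t m"
    if "1 \<le> m" "m \<le> k" for m
    using that
  proof (induction m rule: dec_induct)
    case (step m)
    have tm: "0 \<le> t m" "t m \<le> t (Suc m)" "t (Suc m) \<le> L" "t (Suc m) - t m < \<delta>"
      using range[of m] range[of "Suc m"] steps[of m] step by auto
    have "integral {0..t (Suc m)} (partial_sum F)
        = integral {0..t m} (partial_sum F) + integral {t m..t (Suc m)} (partial_sum F)"
      by (rule Henstock_Kurzweil_Integration.integral_combine[symmetric])
        (use tm partial_sum_integrable[OF F] in auto)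
    also have "integral {t m..t (Suc m)} (partial_sum F)
        \<le> (t (Suc m) - t m) * (partial_sum F (t m) + \<Lambda> * (t (Suc m) - t m))"
      by (rule integral_partial_sum_le[OF F]) (use tm in auto)
    also have "\<dots> \<le> \<delta> * partial_sum F (t m) + \<Lambda> * \<delta> * (t (Suc m) - t m)"
    proof -
      let ?d = "t (Suc m) - t m"
      have "?d * partial_sum F (t m) \<le> \<delta> * partial_sum F (t m)"
        using tm partial_sum_nonneg by (intro mult_right_mono) auto
      moreover have "\<Lambda> * (?d * ?d) \<le> \<Lambda> * (\<delta> * ?d)"
        using tm lipschitz_const_nonneg by (intro mult_left_mono mult_right_mono) auto
      ultimately show ?thesis by (simp add: algebra_simps)
    qed
    finally show ?case
      using step tm by (simp add: algebra_simps)
  qed (simp add: t1[unfolded One_nat_def])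
  then show ?thesis using assms by simp
qed

lemma infsum_integrals_le_samples:
  assumes t: "ordered_samples L n t" and mesh: "samples_mesh_less \<delta> L n t"
  shows "(\<Sum>\<^sub>\<infinity>g\<in>G. integral {0..L} (h g))
           \<le> \<delta> * (\<Sum>\<^sub>\<infinity>(g,s)\<in>G \<times> t ` {1..n}. h g s) + \<Lambda> * \<delta> * L"
proof (rule infsum_integrals_le_if)
  fix F assume F: "finite F" "F \<subseteq> G"
  have "0 < \<delta>" using mesh by (auto simp: samples_mesh_less_def)
  \<comment> \<open>\<open>t\<^sub>n\<^sub>+\<^sub>1 := L\<close> closes the last gap\<close>
  define t' where "t' = t(Suc n := L)"
  have "integral {0..L} (partial_sum F)
          \<le> \<delta> * (\<Sum>j\<in>{1..<Suc n}. partial_sum F (t' j)) + \<Lambda> * \<delta> * L"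
  proof -
    have "t' j \<le> t' (Suc j) \<and> t' (Suc j) - t' j < \<delta>" if "1 \<le> j" "j < Suc n" for j
    proof (cases "j = n")
      case False
      with that have "j \<in> {1..<n}" by simp
      with t mesh have "t j < t (Suc j)" "\<bar>t (Suc j) - t j\<bar> < \<delta>"
        by (auto simp: ordered_samples_def samples_mesh_less_def)
      then show ?thesis using False that by (simp add: t'_def)
    qed (use t mesh in \<open>auto simp: t'_def ordered_samples_def samples_mesh_less_def\<close>)
    moreover have "t' 1 = 0" "t' (Suc n) = L"
      using t by (auto simp: t'_def ordered_samples_def)
    ultimately show ?thesis
      using integral_partial_sum_le_left_riemann_sum[OF F, of t' "Suc n" \<delta>] by simp
  qed
  also have "(\<Sum>j\<in>{1..<Suc n}. partial_sum F (t' j)) = (\<Sum>s\<in>t ` {1..n}. partial_sum F s)"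
    using sum.reindex[OF ordered_samples_inj_on[OF t], of "partial_sum F"]
    by (simp add: t'_def atLeastLessThanSuc_atLeastAtMost)
  also have "\<dots> \<le> (\<Sum>\<^sub>\<infinity>(g,s)\<in>G \<times> t ` {1..n}. h g s)"
    by (rule sum_partial_sums_le_infsum_samples[OF _ ordered_samples_range[OF t] F]) simp
  finally show "integral {0..L} (partial_sum F)
      \<le> \<delta> * (\<Sum>\<^sub>\<infinity>(g,s)\<in>G \<times> t ` {1..n}. h g s) + \<Lambda> * \<delta> * L"
    using \<open>0 < \<delta>\<close> by (simp add: mult_left_mono)
qed

end

lemma samples_lower_bound_if_integrals_lower_bound:
  assumes family: "\<And>f. lipschitz_sum_family (h f) G L (B f) (M * \<nu> f)"
    and "0 \<le> M" "\<And>f. 0 \<le> \<nu> f" "0 < c"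
    and lower: "\<And>f. c * \<nu> f \<le> (\<Sum>\<^sub>\<infinity>g\<in>G. integral {0..L} (h f g))"
  obtains \<delta> where "0 < \<delta>"
    "\<And>n t f. ordered_samples L n t \<Longrightarrow> samples_mesh_less \<delta> L n t \<Longrightarrow>
       (M * L + 1) * \<nu> f \<le> (\<Sum>\<^sub>\<infinity>(g,s)\<in>G \<times> t ` {1..n}. h f g s)"
proof -
  have "0 < L" by (rule lipschitz_sum_family.L_pos[OF family])
  define \<delta> where "\<delta> = c / (2 * (M * L + 1))"
  have pos: "0 < M * L + 1" using \<open>0 \<le> M\<close> \<open>0 < L\<close> by (simp add: add_nonneg_pos)
  then have "0 < \<delta>" using \<open>0 < c\<close> by (simp add: \<delta>_def)
  moreover have "(M * L + 1) * \<nu> f \<le> (\<Sum>\<^sub>\<infinity>(g,s)\<in>G \<times> t ` {1..n}. h f g s)"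
    if t: "ordered_samples L n t" "samples_mesh_less \<delta> L n t" for n t f
  proof -
    let ?S = "\<Sum>\<^sub>\<infinity>(g,s)\<in>G \<times> t ` {1..n}. h f g s"
    have "c * \<nu> f \<le> \<delta> * ?S + M * \<nu> f * \<delta> * L"
      by (rule order_trans[OF lower lipschitz_sum_family.infsum_integrals_le_samples[OF family t]])
    moreover have "c = \<delta> * (2 * (M * L + 1))" using pos by (simp add: \<delta>_def)
    ultimately have "\<delta> * (2 * (M * L + 1)) * \<nu> f \<le> \<delta> * ?S + M * \<nu> f * \<delta> * L"
      by simp
    then have "\<delta> * ((M * L + 1) * \<nu> f) + \<delta> * \<nu> f \<le> \<delta> * ?S"
      by (simp add: algebra_simps)
    then have "\<delta> * ((M * L + 1) * \<nu> f) \<le> \<delta> * ?S"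
      using mult_nonneg_nonneg[of \<delta> "\<nu> f"] \<open>0 < \<delta>\<close> \<open>0 \<le> \<nu> f\<close> by linarith
    then show ?thesis using \<open>0 < \<delta>\<close> by simp
  qed
  ultimately show thesis by (rule that)
qed

lemma integrals_lower_bound_if_samples_lower_bound:
  assumes family: "\<And>f. lipschitz_sum_family (h f) G L (B f) (M * \<nu> f)"
    and "0 \<le> M" "\<And>f. 0 \<le> \<nu> f" "0 < c"
    and T: "finite T" "T \<noteq> {}" "T \<subseteq> {0..L}"
    and lower: "\<And>f. c * \<nu> f \<le> (\<Sum>\<^sub>\<infinity>(g,s)\<in>G \<times> T. h f g s)"
  shows "\<exists>c'>0. \<forall>f. c' * \<nu> f \<le> (\<Sum>\<^sub>\<infinity>g\<in>G. integral {0..L} (h f g))"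
proof -
  have "0 < L" by (rule lipschitz_sum_family.L_pos[OF family])
  define m where "m = real (card T)"
  have "0 < m" using T by (simp add: m_def card_gt_0_iff)
  \<comment> \<open>the averaging length \<open>e\<close> is chosen so small that the Lipschitz error is at most half the lower bound\<close>
  define e where "e = min L (c / (2 * m * M + 1))"
  have den: "0 < 2 * m * M + 1" using \<open>0 < m\<close> \<open>0 \<le> M\<close> by (simp add: add_nonneg_pos)
  have "0 < e" "e \<le> L" using \<open>0 < L\<close> \<open>0 < c\<close> den by (simp_all add: e_def)
  have "e \<le> c / (2 * m * M + 1)" by (simp add: e_def)
  then have "e * (2 * m * M + 1) \<le> c" using den by (simp add: pos_le_divide_eq)
  then have emM: "m * M * e \<le> c / 2" using \<open>0 < e\<close> by (simp add: algebra_simps)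
  show ?thesis
  proof (intro exI[of _ "e * c / (2 * m)"] conjI allI)
    show "0 < e * c / (2 * m)" using \<open>0 < e\<close> \<open>0 < c\<close> \<open>0 < m\<close> by simp
    fix f
    let ?I = "\<Sum>\<^sub>\<infinity>g\<in>G. integral {0..L} (h f g)"
    have "e * (c * \<nu> f) \<le> e * (\<Sum>\<^sub>\<infinity>(g,s)\<in>G \<times> T. h f g s)"
      using lower[of f] \<open>0 < e\<close> by simp
    also have "\<dots> \<le> m * ?I + m * M * e * (e * \<nu> f)"
      using lipschitz_sum_family.infsum_samples_le_integrals[OF family T(1,3) \<open>0 < e\<close> \<open>e \<le> L\<close>, of f]
      by (simp add: m_def power2_eq_square mult_ac)
    also have "m * M * e * (e * \<nu> f) \<le> c / 2 * (e * \<nu> f)"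
      by (rule mult_right_mono[OF emM]) (use \<open>0 < e\<close> \<open>0 \<le> \<nu> f\<close> in simp)
    finally have "e * c * \<nu> f / 2 \<le> m * ?I" by (simp add: algebra_simps)
    then show "e * c / (2 * m) * \<nu> f \<le> ?I" using \<open>0 < m\<close> by (simp add: field_simps)
  qed
qed

section \<open>Exponential orbits of a Bessel system\<close>

lemma exp_orbit_lipschitz_sum_family:
  fixes A :: "'a::complex_hilbert_space \<Rightarrow> 'a"
  assumes "bounded_clinear_op A" "0 < L" "bessel_system G"
  obtains K M where "0 \<le> K" "0 \<le> M"
    "\<And>f. lipschitz_sum_family (\<lambda>g t. (cmod (hinner f (exp_op A t g)))\<^sup>2) G L
            (K * (norm f)\<^sup>2) (M * (norm f)\<^sup>2)"
proof -
  obtain K0 where "clinear_op A" and A_bound0: "\<And>x. norm (A x) \<le> K0 * norm x"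
    using assms(1) unfolding bounded_clinear_op_def clinear_op_def by blast
  define K where "K = max K0 0"
  have "0 \<le> K" by (simp add: K_def)
  have A_bound: "norm (A x) \<le> K * norm x" for x
    using A_bound0[of x] mult_right_mono[of K0 K "norm x"] by (simp add: K_def)
  obtain C where "0 < C" and bessel: "bessel_bound C G"
    using assms(3) by (rule bessel_systemE)
  define R where "R = max 1 L"
  define E where "E = exp (R * K)"
  define M where "M = 2 * C * E * exp (2 * R * K)"
  have exp_bound: "norm (exp_op A t x) \<le> E * norm x" if "t \<in> {0..L}" for t x
    unfolding E_def by (rule norm_exp_op_le[OF A_bound \<open>0 \<le> K\<close>]) (use that in \<open>auto simp: R_def\<close>)
  note clinear_exp = clinear_op_exp_op[OF \<open>clinear_op A\<close> A_bound \<open>0 \<le> K\<close>]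
  have "lipschitz_sum_family (\<lambda>g t. (cmod (hinner f (exp_op A t g)))\<^sup>2) G L
          (C * E\<^sup>2 * (norm f)\<^sup>2) (M * (norm f)\<^sup>2)" for f
  proof
    fix F assume F: "finite F" "F \<subseteq> G"
    show "(\<Sum>g\<in>F. (cmod (hinner f (exp_op A t g)))\<^sup>2) \<le> C * E\<^sup>2 * (norm f)\<^sup>2" if "t \<in> {0..L}" for t
      by (rule bessel_bound_image[OF bessel _ clinear_exp exp_bound _ F])
        (use \<open>0 < C\<close> that in \<open>auto simp: E_def\<close>)
    fix s t assume s: "s \<in> {0..L}" and t: "t \<in> {0..L}"
    have "\<bar>(\<Sum>g\<in>F. (cmod (hinner f (exp_op A t g)))\<^sup>2) - (\<Sum>g\<in>F. (cmod (hinner f (exp_op A s g)))\<^sup>2)\<bar>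
        \<le> 2 * C * E * (\<bar>t - s\<bar> * exp (2 * R * K)) * (norm f)\<^sup>2"
    proof (rule sum_hinner_sq_diff_le[OF bessel _ clinear_exp clinear_exp exp_bound exp_bound _ _ _ F])
      show "norm (exp_op A t x - exp_op A s x) \<le> \<bar>t - s\<bar> * exp (2 * R * K) * norm x" for x
        by (rule norm_exp_op_diff_le[OF A_bound \<open>0 \<le> K\<close>]) (use s t in \<open>auto simp: R_def\<close>)
    qed (use \<open>0 < C\<close> s t in \<open>auto simp: E_def\<close>)
    then show "\<bar>(\<Sum>g\<in>F. (cmod (hinner f (exp_op A t g)))\<^sup>2) - (\<Sum>g\<in>F. (cmod (hinner f (exp_op A s g)))\<^sup>2)\<bar>
        \<le> M * (norm f)\<^sup>2 * \<bar>t - s\<bar>"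
      by (simp add: M_def mult_ac)
  qed (use \<open>0 < L\<close> in auto)
  moreover have "0 \<le> C * E\<^sup>2" "0 \<le> M" using \<open>0 < C\<close> by (simp_all add: M_def E_def)
  ultimately show thesis using that by blast
qed

lemma semi_continuous_frame_iff_lower_bound:
  fixes A :: "'a::complex_hilbert_space \<Rightarrow> 'a"
  assumes family: "\<And>f. lipschitz_sum_family (\<lambda>g t. (cmod (hinner f (exp_op A t g)))\<^sup>2) G L
                        (K * (norm f)\<^sup>2) (\<Lambda> f)"
    and "0 \<le> K"
  shows "semi_continuous_frame A G {0..L} \<longleftrightarrow>
    (\<exists>c>0. \<forall>f. c * (norm f)\<^sup>2 \<le> (\<Sum>\<^sub>\<infinity>g\<in>G. integral {0..L} (\<lambda>t. (cmod (hinner f (exp_op A t g)))\<^sup>2)))"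
proof
  show "\<exists>c>0. \<forall>f. c * (norm f)\<^sup>2 \<le> (\<Sum>\<^sub>\<infinity>g\<in>G. integral {0..L} (\<lambda>t. (cmod (hinner f (exp_op A t g)))\<^sup>2))"
    if "semi_continuous_frame A G {0..L}"
    using that unfolding semi_continuous_frame_def by blast
next
  assume "\<exists>c>0. \<forall>f. c * (norm f)\<^sup>2 \<le> (\<Sum>\<^sub>\<infinity>g\<in>G. integral {0..L} (\<lambda>t. (cmod (hinner f (exp_op A t g)))\<^sup>2))"
  then obtain c where "0 < c"
    and lower: "\<And>f. c * (norm f)\<^sup>2 \<le> (\<Sum>\<^sub>\<infinity>g\<in>G. integral {0..L} (\<lambda>t. (cmod (hinner f (exp_op A t g)))\<^sup>2))"
    by blast
  have "0 < L" by (rule lipschitz_sum_family.L_pos[OF family])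
  show "semi_continuous_frame A G {0..L}"
    unfolding semi_continuous_frame_def
  proof (rule exI[of _ c], rule conjI[OF \<open>0 < c\<close>], rule exI[of _ "L * K + 1"], intro conjI allI ballI)
    show "0 < L * K + 1" using \<open>0 < L\<close> \<open>0 \<le> K\<close> by (simp add: add_nonneg_pos)
    fix f :: 'a
    show "(\<lambda>t. (cmod (hinner f (exp_op A t g)))\<^sup>2) integrable_on {0..L}" if "g \<in> G" for g
      using lipschitz_sum_family.integrable_summand[OF family that, of 0 L] by simp
    show "(\<lambda>g. integral {0..L} (\<lambda>t. (cmod (hinner f (exp_op A t g)))\<^sup>2)) summable_on G"
      by (rule lipschitz_sum_family.integrals_summable[OF family])
    have "(\<Sum>\<^sub>\<infinity>g\<in>G. integral {0..L} (\<lambda>t. (cmod (hinner f (exp_op A t g)))\<^sup>2)) \<le> L * (K * (norm f)\<^sup>2)"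
      by (rule lipschitz_sum_family.infsum_integrals_le[OF family])
    also have "\<dots> \<le> (L * K + 1) * (norm f)\<^sup>2" by (simp add: algebra_simps)
    finally show "(\<Sum>\<^sub>\<infinity>g\<in>G. integral {0..L} (\<lambda>t. (cmod (hinner f (exp_op A t g)))\<^sup>2))
        \<le> (L * K + 1) * (norm f)\<^sup>2" .
  qed (rule lower)
qed

lemma is_frame_iff_lower_bound:
  fixes A :: "'a::complex_hilbert_space \<Rightarrow> 'a"
  assumes family: "\<And>f. lipschitz_sum_family (\<lambda>g t. (cmod (hinner f (exp_op A t g)))\<^sup>2) G L
                        (K * (norm f)\<^sup>2) (\<Lambda> f)"
    and "0 \<le> K" and T: "finite T" "T \<subseteq> {0..L}"
  shows "is_frame (G \<times> T) (\<lambda>(g, s). exp_op A s g) \<longleftrightarrow>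
    (\<exists>c>0. \<forall>f. c * (norm f)\<^sup>2 \<le> (\<Sum>\<^sub>\<infinity>(g,s)\<in>G \<times> T. (cmod (hinner f (exp_op A s g)))\<^sup>2))"
proof -
  have split: "(\<lambda>i. (cmod (hinner f ((\<lambda>(g, s). exp_op A s g) i)))\<^sup>2)
      = (\<lambda>(g,s). (cmod (hinner f (exp_op A s g)))\<^sup>2)" for f
    by (simp add: fun_eq_iff split_beta)
  have upper: "(\<Sum>\<^sub>\<infinity>(g,s)\<in>G \<times> T. (cmod (hinner f (exp_op A s g)))\<^sup>2) \<le> (card T * K + 1) * (norm f)\<^sup>2"
    for f :: 'a
  proof -
    have "(\<Sum>\<^sub>\<infinity>(g,s)\<in>G \<times> T. (cmod (hinner f (exp_op A s g)))\<^sup>2) \<le> card T * (K * (norm f)\<^sup>2)"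
      by (rule lipschitz_sum_family.infsum_samples_le[OF family T])
    also have "\<dots> \<le> (card T * K + 1) * (norm f)\<^sup>2" by (simp add: algebra_simps)
    finally show ?thesis .
  qed
  have "0 < card T * K + 1" using \<open>0 \<le> K\<close> by (simp add: add_nonneg_pos)
  then show ?thesis
    unfolding is_frame_def split
    using lipschitz_sum_family.samples_summable[OF family T] upper by blast
qed

lemma exp_orbit_samples_frame_if_semi_continuous_frame:
  fixes A :: "'a::complex_hilbert_space \<Rightarrow> 'a"
  assumes "bounded_clinear_op A" "0 < L" "bessel_system G" "semi_continuous_frame A G {0..L}"
  obtains \<delta> where "0 < \<delta>"
    "\<And>n t. ordered_samples L n t \<Longrightarrow> samples_mesh_less \<delta> L n t \<Longrightarrow>
       is_frame (G \<times> t ` {1..n}) (\<lambda>(g, s). exp_op A s g)"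
proof -
  obtain K M where "0 \<le> K" "0 \<le> M" and family:
    "\<And>f. lipschitz_sum_family (\<lambda>g t. (cmod (hinner f (exp_op A t g)))\<^sup>2) G L
            (K * (norm f)\<^sup>2) (M * (norm f)\<^sup>2)"
    using exp_orbit_lipschitz_sum_family[OF assms(1-3)] by blast
  obtain c where "0 < c" and lower:
    "\<And>f. c * (norm f)\<^sup>2 \<le> (\<Sum>\<^sub>\<infinity>g\<in>G. integral {0..L} (\<lambda>t. (cmod (hinner f (exp_op A t g)))\<^sup>2))"
    using assms(4) semi_continuous_frame_iff_lower_bound[OF family \<open>0 \<le> K\<close>] by blast
  obtain \<delta> where "0 < \<delta>" and samples_lower:
    "\<And>n t f. ordered_samples L n t \<Longrightarrow> samples_mesh_less \<delta> L n t \<Longrightarrow>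
       (M * L + 1) * (norm f)\<^sup>2 \<le> (\<Sum>\<^sub>\<infinity>(g,s)\<in>G \<times> t ` {1..n}. (cmod (hinner f (exp_op A s g)))\<^sup>2)"
    using samples_lower_bound_if_integrals_lower_bound[where \<nu>="\<lambda>f. (norm f)\<^sup>2",
        OF family \<open>0 \<le> M\<close> zero_le_power2 \<open>0 < c\<close> lower]
    by blast
  have "is_frame (G \<times> t ` {1..n}) (\<lambda>(g, s). exp_op A s g)"
    if "ordered_samples L n t" "samples_mesh_less \<delta> L n t" for n t
    unfolding is_frame_iff_lower_bound[OF family \<open>0 \<le> K\<close> finite_imageI[OF finite_atLeastAtMost]
        ordered_samples_range[OF that(1)]]
    using samples_lower[OF that] \<open>0 \<le> M\<close> \<open>0 < L\<close>
    by (intro exI[of _ "M * L + 1"]) (simp add: add_nonneg_pos)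
  with \<open>0 < \<delta>\<close> show thesis by (rule that)
qed

lemma semi_continuous_frame_if_exp_orbit_samples_frame:
  fixes A :: "'a::complex_hilbert_space \<Rightarrow> 'a"
  assumes "bounded_clinear_op A" "0 < L" "bessel_system G"
    and t: "ordered_samples L n t" and frame: "is_frame (G \<times> t ` {1..n}) (\<lambda>(g, s). exp_op A s g)"
  shows "semi_continuous_frame A G {0..L}"
proof -
  obtain K M where "0 \<le> K" "0 \<le> M" and family:
    "\<And>f. lipschitz_sum_family (\<lambda>g t. (cmod (hinner f (exp_op A t g)))\<^sup>2) G L
            (K * (norm f)\<^sup>2) (M * (norm f)\<^sup>2)"
    using exp_orbit_lipschitz_sum_family[OF assms(1-3)] by blast
  have T: "finite (t ` {1..n})" "t ` {1..n} \<noteq> {}" "t ` {1..n} \<subseteq> {0..L}"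
    using t ordered_samples_range[OF t] by (auto simp: ordered_samples_def)
  obtain c where "0 < c" and lower: "\<And>f. c * (norm f)\<^sup>2 \<le>
      (\<Sum>\<^sub>\<infinity>(g,s)\<in>G \<times> t ` {1..n}. (cmod (hinner f (exp_op A s g)))\<^sup>2)"
    using frame is_frame_iff_lower_bound[OF family \<open>0 \<le> K\<close> T(1,3)] by blast
  show ?thesis
    unfolding semi_continuous_frame_iff_lower_bound[OF family \<open>0 \<le> K\<close>]
    by (rule integrals_lower_bound_if_samples_lower_bound[where \<nu>="\<lambda>f. (norm f)\<^sup>2",
          OF family \<open>0 \<le> M\<close> zero_le_power2 \<open>0 < c\<close> T lower])
qed

theorem mainTheorem1:
  fixes A :: "'a::complex_hilbert_space \<Rightarrow> 'a" and G :: "'a set" and L :: real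
  assumes "separable_space TYPE('a)"
    and "bounded_clinear_op A"
    and "0 < L"
    and "countable G"
    and "bessel_system G"
  shows "(semi_continuous_frame A G {0..L}
          \<longleftrightarrow> (\<exists>\<delta>>0. \<forall>(n::nat) (t::nat \<Rightarrow> real).
                 (1 \<le> n \<and> t 1 = 0 \<and> (\<forall>j\<in>{1..<n}. t j < t (Suc j)) \<and> t n \<le> L \<and>
                  (\<forall>j\<in>{1..<n}. \<bar>t (Suc j) - t j\<bar> < \<delta>) \<and> \<bar>L - t n\<bar> < \<delta>)
                 \<longrightarrow> is_frame (G \<times> t ` {1..n}) (\<lambda>(g, s). exp_op A s g)))
       \<and> (semi_continuous_frame A G {0..L}
          \<longleftrightarrow> (\<exists>(n::nat) (t::nat \<Rightarrow> real).
                 1 \<le> n \<and> t 1 = 0 \<and> (\<forall>j\<in>{1..<n}. t j < t (Suc j)) \<and> t n \<le> L \<and>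
                 is_frame (G \<times> t ` {1..n}) (\<lambda>(g, s). exp_op A s g)))"
proof -
  let ?semi = "semi_continuous_frame A G {0..L}"
  let ?frame = "\<lambda>n t. is_frame (G \<times> t ` {1..n}) (\<lambda>(g, s). exp_op A s g)"
  let ?fine = "\<exists>\<delta>>0. \<forall>n t. ordered_samples L n t \<and> samples_mesh_less \<delta> L n t \<longrightarrow> ?frame n t"
  let ?some = "\<exists>n t. ordered_samples L n t \<and> ?frame n t"
  have "?semi \<Longrightarrow> ?fine"
    using exp_orbit_samples_frame_if_semi_continuous_frame[OF assms(2,3,5)] by metis
  moreover have "?fine \<Longrightarrow> ?some"
    using uniform_samples_exist[OF assms(3)] by metis
  moreover have "?some \<Longrightarrow> ?semi"
    using semi_continuous_frame_if_exp_orbit_samples_frame[OF assms(2,3,5)] by blast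
  ultimately have "(?semi \<longleftrightarrow> ?fine) \<and> (?semi \<longleftrightarrow> ?some)" by blast
  then show ?thesis
    unfolding ordered_samples_def samples_mesh_less_def conj_assoc .
qed

end
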